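(* Let $G$ be a connected finite simple undirected graph with at least two vertices, $W:V_G\to\mathbb{R}$ a potential, $\psi$ the ground state of $H_{G,W}$ with $\psi(x)>0$ for all $x$ and $\sum_x\psi(x)^2=1$, and $\gamma_H$ the gap between the smallest and second-smallest eigenvalues of $H_{G,W}$. For each ordered pair $(x,y)$ of distinct vertices choose a path $\gamma_{xy}$ in $G$ from $x$ to $y$ that traverses no edge more than once, and let $\Gamma$ be this collection of paths. Then $\gamma_H\ge 1/\kappa'$, where $$\kappa'=\max_{e}\sum_{\gamma_{xy}\ni e}\psi(x)^2\psi(y)^2\sum_{g\in\gamma_{xy}}\frac{1}{\psi(g_1)\psi(g_2)},$$ the maximum is over edges $e$ of $G$, the outer sum is over the paths in $\Gamma$ that use the edge $e$, the inner sum is over the edges $g$ of the path $\gamma_{xy}$, and $g_1,g_2$ denote the endpoints of $g$.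
   Context: For a finite simple undirected graph $G$ with vertex set $V_G$, let $\mathcal{H}_G$ be the complex Hilbert space with orthonormal basis $\{|x\rangle : x\in V_G\}$. The graph Laplacian is $L_G=\sum_{x} d_x |x\rangle\langle x| - \sum_{x\sim y}|x\rangle\langle y|$, where $d_x$ is the degree of $x$ and the second sum runs over ordered pairs of adjacent vertices. For a potential $W:V_G\to\mathbb{R}$, $H_{G,W}=L_G+\sum_{x} W(x)|x\rangle\langle x|$. For connected $G$ the ground state is nondegenerate and can be chosen with strictly positive amplitudes (Perron–Frobenius). *)

theory Defs
  imports Complex_Main
begin

definition simple_graph :: "'a set \<Rightarrow> ('a \<Rightarrow> 'a \<Rightarrow> bool) \<Rightarrow> bool" where
  "simple_graph V E \<longleftrightarrow> finite V \<and> (\<forall>x y. E x y \<longrightarrow> x \<in> V \<and> y \<in> V)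
     \<and> (\<forall>x y. E x y \<longrightarrow> E y x) \<and> (\<forall>x. \<not> E x x)"

definition is_walk :: "('a \<Rightarrow> 'a \<Rightarrow> bool) \<Rightarrow> 'a list \<Rightarrow> bool" where
  "is_walk E p \<longleftrightarrow> p \<noteq> [] \<and> (\<forall>i. Suc i < length p \<longrightarrow> E (p ! i) (p ! Suc i))"

definition graph_connected :: "'a set \<Rightarrow> ('a \<Rightarrow> 'a \<Rightarrow> bool) \<Rightarrow> bool" where
  "graph_connected V E \<longleftrightarrow> (\<forall>x\<in>V. \<forall>y\<in>V. \<exists>p. is_walk E p \<and> hd p = x \<and> last p = y)"

definition walk_edges :: "'a list \<Rightarrow> 'a set list" where
  "walk_edges p = map (\<lambda>(a, b). {a, b}) (zip p (tl p))"

definition edge_simple_path :: "('a \<Rightarrow> 'a \<Rightarrow> bool) \<Rightarrow> 'a \<Rightarrow> 'a \<Rightarrow> 'a list \<Rightarrow> bool" where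
  "edge_simple_path E x y p \<longleftrightarrow> is_walk E p \<and> hd p = x \<and> last p = y \<and> distinct (walk_edges p)"

definition graph_edges :: "('a \<Rightarrow> 'a \<Rightarrow> bool) \<Rightarrow> 'a set set" where
  "graph_edges E = {{u, v} | u v. E u v}"

definition degree :: "'a set \<Rightarrow> ('a \<Rightarrow> 'a \<Rightarrow> bool) \<Rightarrow> 'a \<Rightarrow> nat" where
  "degree V E x = card {y \<in> V. E x y}"

text \<open>Action of H_{G,W} = L_G + W on a vector f : V -> complex (coordinates w.r.t. |x>).\<close>
definition Hop :: "'a set \<Rightarrow> ('a \<Rightarrow> 'a \<Rightarrow> bool) \<Rightarrow> ('a \<Rightarrow> real) \<Rightarrow> ('a \<Rightarrow> complex) \<Rightarrow> 'a \<Rightarrow> complex" where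
  "Hop V E W f x = of_nat (degree V E x) * f x - (\<Sum>y\<in>{y \<in> V. E x y}. f y) + of_real (W x) * f x"

text \<open>Eigenvalues of H_{G,W} acting on the complex Hilbert space with basis indexed by V
(all eigenvalues are real since H is Hermitian).\<close>
definition eigenvalues :: "'a set \<Rightarrow> ('a \<Rightarrow> 'a \<Rightarrow> bool) \<Rightarrow> ('a \<Rightarrow> real) \<Rightarrow> real set" where
  "eigenvalues V E W = {lam. \<exists>f. (\<exists>x\<in>V. f x \<noteq> 0) \<and> (\<forall>x\<in>V. Hop V E W f x = of_real lam * f x)}"

definition ground_energy :: "'a set \<Rightarrow> ('a \<Rightarrow> 'a \<Rightarrow> bool) \<Rightarrow> ('a \<Rightarrow> real) \<Rightarrow> real" where
  "ground_energy V E W = Min (eigenvalues V E W)"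

text \<open>Since the ground state is
nondegenerate, the second-smallest eigenvalue (with multiplicity) is the smallest
eigenvalue different from the ground energy.\<close>
definition spectral_gap :: "'a set \<Rightarrow> ('a \<Rightarrow> 'a \<Rightarrow> bool) \<Rightarrow> ('a \<Rightarrow> real) \<Rightarrow> real" where
  "spectral_gap V E W = Min (eigenvalues V E W - {ground_energy V E W}) - ground_energy V E W"

definition kappa' :: "'a set \<Rightarrow> ('a \<Rightarrow> 'a \<Rightarrow> bool) \<Rightarrow> ('a \<Rightarrow> real) \<Rightarrow> ('a \<Rightarrow> 'a \<Rightarrow> 'a list) \<Rightarrow> real" where
  "kappa' V E \<psi> \<Gamma> = Max ((\<lambda>e. \<Sum>(x, y)\<in>{(x, y). x \<in> V \<and> y \<in> V \<and> x \<noteq> y \<and> e \<in> set (walk_edges (\<Gamma> x y))}.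
        \<psi> x ^ 2 * \<psi> y ^ 2 *
        sum_list (map (\<lambda>(a, b). 1 / (\<psi> a * \<psi> b)) (zip (\<Gamma> x y) (tl (\<Gamma> x y))))) ` graph_edges E)"

end

theory Submission
  imports Defs "Jordan_Normal_Form.Spectral_Radius"
begin

(* Write f = psi * g (ground-state transform). Because H psi = E0 psi, the quadratic form
   <f, (H - E0) f> is half the Dirichlet form D f, the sum of psi x psi y |g x - g y|^2 over
   ordered pairs of adjacent vertices, and for f orthogonal to psi, 2 |f|^2 is the variance
   sum_{x,y} psi x^2 psi y^2 |g x - g y|^2.  Bounding each |g x - g y|^2 by the Cauchy-Schwarz
   inequality along the path Gamma x y and regrouping the resulting sum by edges gives
   4 |f|^2 <= kappa' * D f, so an eigenvector orthogonal to psi has eigenvalue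
   E0 + D f / (2 |f|^2) >= E0 + 2 / kappa'.  That such eigenvectors exist, and that there are
   only finitely many eigenvalues, is read off the matrix of H on the invariant subspace
   orthogonal to psi. *)

lemma power2_add_le_weighted:
  fixes w s t L C :: real
  assumes "w > 0" "s \<ge> 0" "t \<ge> 0" "L \<ge> 0" "C \<ge> 0" "t\<^sup>2 \<le> L * C"
  shows "(s + t)\<^sup>2 \<le> (1 / w + L) * (w * s\<^sup>2 + C)"
proof -
  have "(2 * s * t)\<^sup>2 \<le> 4 * (C / w) * (L * w * s\<^sup>2)"
    using assms mult_left_mono[OF assms(6), of "4 * s\<^sup>2"] by (simp add: power_mult_distrib mult_ac)
  also have "\<dots> \<le> (C / w + L * w * s\<^sup>2)\<^sup>2"
    using zero_le_power2[of "C / w - L * w * s\<^sup>2"] unfolding power2_eq_square by argo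
  finally have "2 * s * t \<le> C / w + L * w * s\<^sup>2"
    by (rule power2_le_imp_le) (use assms in simp)
  moreover have "(1 / w + L) * (w * s\<^sup>2 + C) = s\<^sup>2 + C / w + L * w * s\<^sup>2 + L * C"
    using assms(1) by (simp add: algebra_simps)
  ultimately show ?thesis
    using assms(6) by (simp add: power2_sum)
qed

lemma walk_cauchy_schwarz:
  fixes d w :: "'a \<Rightarrow> 'a \<Rightarrow> real"
  assumes "p \<noteq> []" and "\<And>a. d a a = 0" and "\<And>a b. d a b \<ge> 0"
    and "\<And>a m b. d a b \<le> d a m + d m b"
    and "\<forall>(a, b) \<in> set (zip p (tl p)). w a b > 0"
  shows "(d (hd p) (last p))\<^sup>2
    \<le> sum_list (map (\<lambda>(a, b). 1 / w a b) (zip p (tl p)))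
      * sum_list (map (\<lambda>(a, b). w a b * (d a b)\<^sup>2) (zip p (tl p)))"
  using assms(1,5)
proof (induction p)
  case (Cons a q)
  show ?case
  proof (cases q)
    case Nil
    then show ?thesis by (simp add: assms(2))
  next
    case (Cons b r)
    let ?L = "sum_list (map (\<lambda>(a, b). 1 / w a b) (zip q (tl q)))"
    let ?C = "sum_list (map (\<lambda>(a, b). w a b * (d a b)\<^sup>2) (zip q (tl q)))"
    have pos: "\<forall>(a, b) \<in> set (zip q (tl q)). w a b > 0" and wab: "w a b > 0"
      using Cons.prems(2) \<open>q = b # r\<close> by auto
    have "?L \<ge> 0" "?C \<ge> 0"
      using pos assms(3) by (auto intro!: sum_list_nonneg simp: less_imp_le split: prod.splits)
    have "(d a (last q))\<^sup>2 \<le> (d a b + d b (last q))\<^sup>2"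
      using assms(3,4) by (intro power_mono) auto
    also have "\<dots> \<le> (1 / w a b + ?L) * (w a b * (d a b)\<^sup>2 + ?C)"
      using Cons.IH[OF _ pos] \<open>q = b # r\<close> wab \<open>?L \<ge> 0\<close> \<open>?C \<ge> 0\<close> assms(3)
      by (intro power2_add_le_weighted) auto
    finally show ?thesis
      using \<open>q = b # r\<close> by simp
  qed
qed simp

lemma double_sum_cross_diff_sq:
  fixes \<psi> :: "'a \<Rightarrow> real" and f :: "'a \<Rightarrow> complex"
  assumes "(\<Sum>x\<in>V. (\<psi> x)\<^sup>2) = 1" and "(\<Sum>x\<in>V. of_real (\<psi> x) * f x) = 0"
  shows "(\<Sum>x\<in>V. \<Sum>y\<in>V. (cmod (of_real (\<psi> y) * f x - of_real (\<psi> x) * f y))\<^sup>2)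
    = 2 * (\<Sum>x\<in>V. (cmod (f x))\<^sup>2)"
proof -
  define a where "a x = of_real (\<psi> x) * f x" for x
  define b where "b x = (of_real ((\<psi> x)\<^sup>2) :: complex)" for x
  define m where "m x = f x * cnj (f x)" for x
  have "complex_of_real (\<Sum>x\<in>V. \<Sum>y\<in>V. (cmod (of_real (\<psi> y) * f x - of_real (\<psi> x) * f y))\<^sup>2)
      = (\<Sum>x\<in>V. \<Sum>y\<in>V. b y * m x + b x * m y - a x * cnj (a y) - a y * cnj (a x))"
    unfolding of_real_sum complex_norm_square a_def b_def m_def
    by (intro sum.cong refl) (simp add: algebra_simps power2_eq_square)
  also have "\<dots> = (\<Sum>x\<in>V. m x) * (\<Sum>y\<in>V. b y) + (\<Sum>x\<in>V. b x) * (\<Sum>y\<in>V. m y)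
      - (\<Sum>x\<in>V. a x) * cnj (\<Sum>y\<in>V. a y) - (\<Sum>y\<in>V. a y) * cnj (\<Sum>x\<in>V. a x)"
    by (simp add: sum.distrib sum_subtractf sum_product mult.commute[of "b _"])
      (subst (2) sum.swap, simp add: mult.commute)
  also have "\<dots> = 2 * (\<Sum>x\<in>V. m x)"
    using assms unfolding a_def b_def by (simp del: of_real_power flip: of_real_sum)
  also have "\<dots> = of_real (2 * (\<Sum>x\<in>V. (cmod (f x))\<^sup>2))"
    unfolding m_def of_real_mult of_real_sum complex_norm_square by simp
  finally show ?thesis
    using of_real_eq_iff by blast
qed

lemma simple_graphD:
  assumes "simple_graph V E"
  shows "finite V" and "E x y \<Longrightarrow> x \<in> V" and "E x y \<Longrightarrow> y \<in> V"
    and "E x y \<longleftrightarrow> E y x" and "\<not> E x x"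
  using assms unfolding simple_graph_def by blast+

lemma Hop_eq_sum:
  assumes "finite V"
  shows "Hop V E W f x
    = (of_nat (Defs.degree V E x) + of_real (W x)) * f x - (\<Sum>y\<in>V. if E x y then f y else 0)"
  unfolding Hop_def using assms by (simp add: sum.inter_filter algebra_simps)

lemma Hop_cong: "(\<And>y. y \<in> V \<Longrightarrow> f y = g y) \<Longrightarrow> x \<in> V \<Longrightarrow> Hop V E W f x = Hop V E W g x"
  unfolding Hop_def by (auto intro!: sum.cong)

lemma Hop_sum:
  assumes "finite K"
  shows "Hop V E W (\<lambda>x. \<Sum>k\<in>K. a k * F k x) y = (\<Sum>k\<in>K. a k * Hop V E W (F k) y)"
proof -
  have "(\<Sum>z\<in>{z \<in> V. E y z}. \<Sum>k\<in>K. a k * F k z) = (\<Sum>k\<in>K. a k * (\<Sum>z\<in>{z \<in> V. E y z}. F k z))"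
    by (subst sum.swap) (simp add: sum_distrib_left)
  then show ?thesis
    unfolding Hop_def
    by (simp add: sum_distrib_left algebra_simps sum.distrib sum_subtractf)
qed

lemma Hop_symmetric:
  assumes "simple_graph V E"
  shows "(\<Sum>x\<in>V. u x * Hop V E W f x) = (\<Sum>x\<in>V. Hop V E W u x * f x)"
proof -
  note G = simple_graphD[OF assms]
  have "(\<Sum>x\<in>V. u x * (\<Sum>y\<in>V. if E x y then f y else 0))
      = (\<Sum>x\<in>V. \<Sum>y\<in>V. if E x y then u x * f y else 0)"
    by (simp add: sum_distrib_left if_distrib cong: if_cong)
  also have "\<dots> = (\<Sum>y\<in>V. \<Sum>x\<in>V. if E y x then u x * f y else 0)"
    by (subst sum.swap) (simp add: G(4))
  also have "\<dots> = (\<Sum>y\<in>V. (\<Sum>x\<in>V. if E y x then u x else 0) * f y)"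
    by (auto simp: sum_distrib_right intro!: sum.cong)
  finally show ?thesis
    unfolding Hop_eq_sum[OF G(1)] by (simp add: algebra_simps sum_subtractf sum.distrib)
qed

lemma walk_edge:
  assumes "is_walk E p" and "(a, b) \<in> set (zip p (tl p))"
  shows "E a b"
proof -
  obtain i where "i < length (zip p (tl p))" and "zip p (tl p) ! i = (a, b)"
    using assms(2) by (auto simp: in_set_conv_nth)
  then show ?thesis
    using assms(1) unfolding is_walk_def by (auto simp: nth_tl)
qed

lemma set_zip_consecutive: "(a, b) \<in> set (zip p (tl p)) \<Longrightarrow> a \<in> set p \<and> b \<in> set p"
  by (cases p) (auto dest: set_zip_leftD set_zip_rightD)

lemma set_walk_edges_subset: "is_walk E p \<Longrightarrow> set (walk_edges p) \<subseteq> graph_edges E"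
  unfolding walk_edges_def graph_edges_def by (auto dest: walk_edge)

lemma set_walk_subset:
  assumes "simple_graph V E" and "is_walk E p" and "hd p \<in> V"
  shows "set p \<subseteq> V"
proof
  fix v assume "v \<in> set p"
  then obtain i where i: "i < length p" "v = p ! i"
    by (auto simp: in_set_conv_nth)
  show "v \<in> V"
  proof (cases i)
    case 0
    then show ?thesis using assms(2,3) i by (simp add: hd_conv_nth is_walk_def)
  next
    case (Suc j)
    then have "E (p ! j) (p ! i)"
      using assms(2) i unfolding is_walk_def by auto
    then show ?thesis using simple_graphD(3)[OF assms(1)] i by blast
  qed
qed

lemma edge_simple_path_walk:
  assumes "simple_graph V E" and "edge_simple_path E x y p" and "x \<in> V"
  shows "p \<noteq> []" and "set p \<subseteq> V" and "hd p = x" and "last p = y"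
  using assms set_walk_subset[OF assms(1)] unfolding edge_simple_path_def is_walk_def by auto

lemma finite_graph_edges:
  assumes "simple_graph V E"
  shows "finite (graph_edges E)"
proof -
  have "graph_edges E \<subseteq> Pow V"
    unfolding graph_edges_def using simple_graphD(2,3)[OF assms] by auto
  then show ?thesis
    using simple_graphD(1)[OF assms] by (simp add: finite_subset)
qed

section \<open>The ground-state transform\<close>

locale positive_eigenvector =
  fixes V :: "'a set" and E :: "'a \<Rightarrow> 'a \<Rightarrow> bool" and W :: "'a \<Rightarrow> real"
    and \<psi> :: "'a \<Rightarrow> real" and c :: real
  assumes simple: "simple_graph V E"
    and pos: "\<forall>x\<in>V. \<psi> x > 0"
    and eigen: "\<forall>x\<in>V. Hop V E W (\<lambda>v. of_real (\<psi> v)) x = of_real c * of_real (\<psi> x)"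
begin

lemmas finite_V = simple_graphD(1)[OF simple]
   and edge_in_V = simple_graphD(2,3)[OF simple]
   and sym_edge = simple_graphD(4)[OF simple]
   and no_loop = simple_graphD(5)[OF simple]

definition ratio :: "('a \<Rightarrow> complex) \<Rightarrow> 'a \<Rightarrow> complex" where
  "ratio f x = f x / of_real (\<psi> x)"

definition ratio_dist :: "('a \<Rightarrow> complex) \<Rightarrow> 'a \<Rightarrow> 'a \<Rightarrow> real" where
  "ratio_dist f x y = cmod (ratio f x - ratio f y)"

definition dirichlet :: "('a \<Rightarrow> complex) \<Rightarrow> real" where
  "dirichlet f = (\<Sum>x\<in>V. \<Sum>y\<in>V. if E x y then \<psi> x * \<psi> y * (ratio_dist f x y)\<^sup>2 else 0)"

definition sqnorm :: "('a \<Rightarrow> complex) \<Rightarrow> real" where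
  "sqnorm f = (\<Sum>x\<in>V. (cmod (f x))\<^sup>2)"

lemma of_real_mult_ratio: "x \<in> V \<Longrightarrow> of_real (\<psi> x) * ratio f x = f x"
  using pos unfolding ratio_def by force

lemma Hop_minus_eigenvalue:
  assumes "x \<in> V"
  shows "Hop V E W f x - of_real c * f x
    = (\<Sum>y\<in>V. if E x y then of_real (\<psi> y) * (ratio f x - ratio f y) else 0)"
proof -
  define d where "d = (of_nat (Defs.degree V E x) + of_real (W x) :: complex)"
  define S where "S = (\<Sum>y\<in>V. if E x y then (of_real (\<psi> y) :: complex) else 0)"
  have "d * of_real (\<psi> x) - S = of_real c * of_real (\<psi> x)"
    using eigen assms unfolding d_def S_def Hop_eq_sum[OF finite_V] by simp
  then have "S = (d - of_real c) * of_real (\<psi> x)"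
    by (simp add: algebra_simps)
  then have "S * ratio f x = (d - of_real c) * f x"
    by (simp add: mult.assoc of_real_mult_ratio[OF assms])
  moreover have "(\<Sum>y\<in>V. if E x y then of_real (\<psi> y) * (ratio f x - ratio f y) else 0)
      = S * ratio f x - (\<Sum>y\<in>V. if E x y then f y else 0)"
    unfolding S_def sum_distrib_right sum_subtractf[symmetric]
    by (intro sum.cong refl) (auto simp: algebra_simps of_real_mult_ratio dest: edge_in_V)
  ultimately show ?thesis
    unfolding Hop_eq_sum[OF finite_V] d_def by (simp add: algebra_simps)
qed

lemma quadratic_form_eq_dirichlet:
  "(\<Sum>x\<in>V. cnj (f x) * (Hop V E W f x - of_real c * f x)) = of_real (dirichlet f / 2)"
proof -
  define T where "T x y = (if E x y
    then of_real (\<psi> x * \<psi> y) * (cnj (ratio f x) * (ratio f x - ratio f y)) else 0)" for x y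
  have quad: "(\<Sum>x\<in>V. cnj (f x) * (Hop V E W f x - of_real c * f x)) = (\<Sum>x\<in>V. \<Sum>y\<in>V. T x y)"
  proof (intro sum.cong refl)
    fix x assume x: "x \<in> V"
    have "cnj (f x) = of_real (\<psi> x) * cnj (ratio f x)"
      using of_real_mult_ratio[OF x, of f] by (metis complex_cnj_complex_of_real complex_cnj_mult)
    then show "cnj (f x) * (Hop V E W f x - of_real c * f x) = (\<Sum>y\<in>V. T x y)"
      unfolding Hop_minus_eigenvalue[OF x] sum_distrib_left T_def
      by (intro sum.cong refl) (simp add: algebra_simps)
  qed
  have sym: "T x y + T y x = of_real (if E x y then \<psi> x * \<psi> y * (ratio_dist f x y)\<^sup>2 else 0)"
    for x y
  proof (cases "E x y")
    case True
    then have "T x y + T y x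
        = of_real (\<psi> x * \<psi> y) * ((ratio f x - ratio f y) * cnj (ratio f x - ratio f y))"
      using sym_edge[of x y] unfolding T_def by (simp add: algebra_simps)
    then show ?thesis
      using True unfolding ratio_dist_def complex_norm_square[symmetric] by simp
  next
    case False
    then show ?thesis using sym_edge[of x y] unfolding T_def by simp
  qed
  have "2 * (\<Sum>x\<in>V. cnj (f x) * (Hop V E W f x - of_real c * f x))
      = (\<Sum>x\<in>V. \<Sum>y\<in>V. T x y) + (\<Sum>x\<in>V. \<Sum>y\<in>V. T y x)"
    unfolding quad mult_2 by (subst (2) sum.swap) (rule refl)
  also have "\<dots> = of_real (dirichlet f)"
    unfolding dirichlet_def of_real_sum sum.distrib[symmetric] sym ..
  finally show ?thesis
    by (simp add: field_simps)
qed

lemma dirichlet_nonneg: "dirichlet f \<ge> 0"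
  unfolding dirichlet_def using pos by (intro sum_nonneg) (simp add: less_imp_le)

lemma ratio_dist_self: "ratio_dist f x x = 0"
  unfolding ratio_dist_def by simp

lemma ratio_dist_commute: "ratio_dist f x y = ratio_dist f y x"
  unfolding ratio_dist_def by (simp add: norm_minus_commute)

lemma ratio_dist_triangle: "ratio_dist f x y \<le> ratio_dist f x z + ratio_dist f z y"
  unfolding ratio_dist_def by (rule norm_diff_triangle_le[OF order_refl order_refl])

lemma scaled_ratio_dist:
  assumes "x \<in> V" and "y \<in> V"
  shows "\<psi> x * \<psi> y * ratio_dist f x y = cmod (of_real (\<psi> y) * f x - of_real (\<psi> x) * f y)"
proof -
  have "of_real (\<psi> x * \<psi> y) * (ratio f x - ratio f y)
      = of_real (\<psi> y) * f x - of_real (\<psi> x) * f y"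
    using of_real_mult_ratio[OF assms(1), of f] of_real_mult_ratio[OF assms(2), of f]
    by (simp add: algebra_simps)
  then show ?thesis
    using pos assms unfolding ratio_dist_def
    by (metis abs_of_pos mult_pos_pos norm_mult norm_of_real)
qed

lemma variance_identity:
  assumes "(\<Sum>x\<in>V. (\<psi> x)\<^sup>2) = 1" and "(\<Sum>x\<in>V. of_real (\<psi> x) * f x) = 0"
  shows "(\<Sum>x\<in>V. \<Sum>y\<in>V. (\<psi> x)\<^sup>2 * (\<psi> y)\<^sup>2 * (ratio_dist f x y)\<^sup>2) = 2 * sqnorm f"
proof -
  have "(\<psi> x)\<^sup>2 * (\<psi> y)\<^sup>2 * (ratio_dist f x y)\<^sup>2
      = (cmod (of_real (\<psi> y) * f x - of_real (\<psi> x) * f y))\<^sup>2" if "x \<in> V" "y \<in> V" for x y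
    using scaled_ratio_dist[OF that, of f] by (metis power_mult_distrib)
  then show ?thesis
    unfolding sqnorm_def using double_sum_cross_diff_sq[OF assms] by simp
qed

section \<open>Canonical paths\<close>

definition path_resistance :: "'a list \<Rightarrow> real" where
  "path_resistance p = sum_list (map (\<lambda>(a, b). 1 / (\<psi> a * \<psi> b)) (zip p (tl p)))"

definition path_energy :: "('a \<Rightarrow> complex) \<Rightarrow> 'a list \<Rightarrow> real" where
  "path_energy f p = sum_list (map (\<lambda>(a, b). \<psi> a * \<psi> b * (ratio_dist f a b)\<^sup>2) (zip p (tl p)))"

lemma path_cauchy_schwarz:
  assumes "p \<noteq> []" and "set p \<subseteq> V"
  shows "(ratio_dist f (hd p) (last p))\<^sup>2 \<le> path_resistance p * path_energy f p"
  unfolding path_resistance_def path_energy_def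
proof (rule walk_cauchy_schwarz[OF assms(1)])
  show "\<forall>(a, b) \<in> set (zip p (tl p)). \<psi> a * \<psi> b > 0"
    using assms(2) pos by (auto dest!: set_zip_consecutive intro!: mult_pos_pos)
qed (use ratio_dist_self ratio_dist_triangle in \<open>auto simp: ratio_dist_def\<close>)

(* An edge and its reverse carry the same energy, so halving the sum over both orientations
   gives the energy of the undirected edge e. *)
definition edge_energy :: "('a \<Rightarrow> complex) \<Rightarrow> 'a set \<Rightarrow> real" where
  "edge_energy f e = (\<Sum>(a, b)\<in>{(a, b). a \<in> V \<and> b \<in> V \<and> E a b \<and> {a, b} = e}.
     \<psi> a * \<psi> b * (ratio_dist f a b)\<^sup>2) / 2"

lemma edge_energy_edge:
  assumes "E a b"
  shows "edge_energy f {a, b} = \<psi> a * \<psi> b * (ratio_dist f a b)\<^sup>2"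
proof -
  have "{(x, y). x \<in> V \<and> y \<in> V \<and> E x y \<and> {x, y} = {a, b}} = {(a, b), (b, a)}"
    using assms edge_in_V sym_edge[of a b] by (auto simp: doubleton_eq_iff)
  moreover have "a \<noteq> b"
    using assms no_loop by auto
  ultimately show ?thesis
    unfolding edge_energy_def by (simp add: ratio_dist_commute[of f b a])
qed

lemma edge_energy_nonneg: "edge_energy f e \<ge> 0"
  unfolding edge_energy_def using pos by (intro divide_nonneg_pos sum_nonneg) (auto simp: less_imp_le)

lemma dirichlet_eq_sum_edge_energy: "dirichlet f = 2 * (\<Sum>e\<in>graph_edges E. edge_energy f e)"
proof -
  define P where "P = {(a, b). a \<in> V \<and> b \<in> V \<and> E a b}"
  define h where "h = (\<lambda>(a, b). \<psi> a * \<psi> b * (ratio_dist f a b)\<^sup>2)"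
  have "finite P"
    unfolding P_def by (rule finite_subset[of _ "V \<times> V"]) (auto simp: finite_V)
  have "dirichlet f = (\<Sum>z\<in>V \<times> V. if E (fst z) (snd z) then h z else 0)"
    unfolding dirichlet_def h_def sum.cartesian_product by (intro sum.cong refl) auto
  also have "\<dots> = sum h P"
    unfolding P_def using finite_V
    by (simp add: sum.inter_filter[symmetric]) (intro sum.cong refl, auto)
  also have "\<dots> = (\<Sum>e\<in>(\<lambda>(a, b). {a, b}) ` P. sum h {z \<in> P. (\<lambda>(a, b). {a, b}) z = e})"
    by (rule sum.image_gen[OF \<open>finite P\<close>])
  also have "(\<lambda>(a, b). {a, b}) ` P = graph_edges E"
    unfolding P_def graph_edges_def using edge_in_V by auto
  also have "(\<Sum>e\<in>graph_edges E. sum h {z \<in> P. (\<lambda>(a, b). {a, b}) z = e})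
      = (\<Sum>e\<in>graph_edges E. 2 * edge_energy f e)"
    unfolding edge_energy_def P_def h_def by (intro sum.cong refl) (auto intro!: arg_cong[where f = "sum _"])
  finally show ?thesis
    by (simp add: sum_distrib_left)
qed

lemma path_energy_eq_sum_edge_energy:
  assumes "is_walk E p" and "distinct (walk_edges p)"
  shows "path_energy f p = (\<Sum>e\<in>set (walk_edges p). edge_energy f e)"
proof -
  have "path_energy f p = sum_list (map (edge_energy f) (walk_edges p))"
    unfolding path_energy_def walk_edges_def map_map
    by (intro arg_cong[where f = sum_list] map_cong refl)
      (auto simp: edge_energy_edge walk_edge[OF assms(1)])
  then show ?thesis
    using assms(2) by (simp add: sum_list_distinct_conv_sum_set)
qed

lemma congestion_le_kappa':
  assumes "e \<in> graph_edges E"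
  shows "(\<Sum>(x, y)\<in>{(x, y). x \<in> V \<and> y \<in> V \<and> x \<noteq> y \<and> e \<in> set (walk_edges (\<Gamma> x y))}.
      (\<psi> x)\<^sup>2 * (\<psi> y)\<^sup>2 * path_resistance (\<Gamma> x y)) \<le> kappa' V E \<psi> \<Gamma>"
  unfolding kappa'_def path_resistance_def
  using assms finite_graph_edges[OF simple] by (intro Max_ge) auto

lemma variance_le_path_sum:
  assumes norm: "(\<Sum>x\<in>V. (\<psi> x)\<^sup>2) = 1"
    and paths: "\<forall>x\<in>V. \<forall>y\<in>V. x \<noteq> y \<longrightarrow> edge_simple_path E x y (\<Gamma> x y)"
    and orth: "(\<Sum>x\<in>V. of_real (\<psi> x) * f x) = 0"
  shows "2 * sqnorm f \<le> (\<Sum>(x, y)\<in>{(x, y). x \<in> V \<and> y \<in> V \<and> x \<noteq> y}.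
    (\<psi> x)\<^sup>2 * (\<psi> y)\<^sup>2 * path_resistance (\<Gamma> x y) * path_energy f (\<Gamma> x y))"
proof -
  have "2 * sqnorm f = (\<Sum>(x, y)\<in>V \<times> V. (\<psi> x)\<^sup>2 * (\<psi> y)\<^sup>2 * (ratio_dist f x y)\<^sup>2)"
    unfolding variance_identity[OF norm orth, symmetric] sum.cartesian_product ..
  also have "\<dots> = (\<Sum>(x, y)\<in>{(x, y). x \<in> V \<and> y \<in> V \<and> x \<noteq> y}.
      (\<psi> x)\<^sup>2 * (\<psi> y)\<^sup>2 * (ratio_dist f x y)\<^sup>2)"
    using finite_V by (intro sum.mono_neutral_right) (auto simp: ratio_dist_self)
  also have "\<dots> \<le> (\<Sum>(x, y)\<in>{(x, y). x \<in> V \<and> y \<in> V \<and> x \<noteq> y}.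
      (\<psi> x)\<^sup>2 * (\<psi> y)\<^sup>2 * path_resistance (\<Gamma> x y) * path_energy f (\<Gamma> x y))"
  proof (rule sum_mono, clarify)
    fix x y assume "x \<in> V" "y \<in> V" "x \<noteq> y"
    then have "edge_simple_path E x y (\<Gamma> x y)"
      using paths by blast
    then have "(ratio_dist f x y)\<^sup>2 \<le> path_resistance (\<Gamma> x y) * path_energy f (\<Gamma> x y)"
      using path_cauchy_schwarz[of "\<Gamma> x y" f] edge_simple_path_walk[OF simple _ \<open>x \<in> V\<close>] by auto
    from mult_left_mono[OF this, of "(\<psi> x)\<^sup>2 * (\<psi> y)\<^sup>2"]
    show "(\<psi> x)\<^sup>2 * (\<psi> y)\<^sup>2 * (ratio_dist f x y)\<^sup>2
        \<le> (\<psi> x)\<^sup>2 * (\<psi> y)\<^sup>2 * path_resistance (\<Gamma> x y) * path_energy f (\<Gamma> x y)"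
      by (simp add: mult.assoc)
  qed
  finally show ?thesis .
qed

lemma path_sum_le_kappa'_dirichlet:
  assumes paths: "\<forall>x\<in>V. \<forall>y\<in>V. x \<noteq> y \<longrightarrow> edge_simple_path E x y (\<Gamma> x y)"
  shows "(\<Sum>(x, y)\<in>{(x, y). x \<in> V \<and> y \<in> V \<and> x \<noteq> y}.
    (\<psi> x)\<^sup>2 * (\<psi> y)\<^sup>2 * path_resistance (\<Gamma> x y) * path_energy f (\<Gamma> x y))
    \<le> kappa' V E \<psi> \<Gamma> * dirichlet f / 2"
proof -
  define P where "P = {(x, y). x \<in> V \<and> y \<in> V \<and> x \<noteq> y}"
  define edges where "edges z = set (walk_edges (\<Gamma> (fst z) (snd z)))" for z
  define a where "a z = (\<psi> (fst z))\<^sup>2 * (\<psi> (snd z))\<^sup>2 * path_resistance (\<Gamma> (fst z) (snd z))" for z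
  have "finite P"
    unfolding P_def by (rule finite_subset[of _ "V \<times> V"]) (auto simp: finite_V)
  have "(\<Sum>(x, y)\<in>P. (\<psi> x)\<^sup>2 * (\<psi> y)\<^sup>2 * path_resistance (\<Gamma> x y) * path_energy f (\<Gamma> x y))
      = (\<Sum>z\<in>P. \<Sum>e\<in>{e \<in> graph_edges E. e \<in> edges z}. a z * edge_energy f e)"
  proof (intro sum.cong refl, clarify)
    fix x y assume "(x, y) \<in> P"
    then have "is_walk E (\<Gamma> x y)" and "distinct (walk_edges (\<Gamma> x y))"
      using paths unfolding P_def edge_simple_path_def by auto
    moreover have "{e \<in> graph_edges E. e \<in> edges (x, y)} = edges (x, y)"
      using set_walk_edges_subset[OF \<open>is_walk E (\<Gamma> x y)\<close>] unfolding edges_def by auto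
    ultimately show "(\<psi> x)\<^sup>2 * (\<psi> y)\<^sup>2 * path_resistance (\<Gamma> x y) * path_energy f (\<Gamma> x y)
        = (\<Sum>e\<in>{e \<in> graph_edges E. e \<in> edges (x, y)}. a (x, y) * edge_energy f e)"
      unfolding edges_def a_def by (simp add: path_energy_eq_sum_edge_energy sum_distrib_left)
  qed
  also have "\<dots> = (\<Sum>e\<in>graph_edges E. (\<Sum>z\<in>{z \<in> P. e \<in> edges z}. a z) * edge_energy f e)"
    unfolding sum.swap_restrict[OF \<open>finite P\<close> finite_graph_edges[OF simple]]
    by (simp add: sum_distrib_right)
  also have "\<dots> \<le> (\<Sum>e\<in>graph_edges E. kappa' V E \<psi> \<Gamma> * edge_energy f e)"
  proof (intro sum_mono mult_right_mono edge_energy_nonneg)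
    fix e assume "e \<in> graph_edges E"
    moreover have "{z \<in> P. e \<in> edges z}
        = {(x, y). x \<in> V \<and> y \<in> V \<and> x \<noteq> y \<and> e \<in> set (walk_edges (\<Gamma> x y))}"
      unfolding P_def edges_def by auto
    ultimately show "(\<Sum>z\<in>{z \<in> P. e \<in> edges z}. a z) \<le> kappa' V E \<psi> \<Gamma>"
      using congestion_le_kappa' unfolding a_def by (simp add: case_prod_unfold)
  qed
  also have "\<dots> = kappa' V E \<psi> \<Gamma> * dirichlet f / 2"
    by (simp add: dirichlet_eq_sum_edge_energy sum_distrib_left[symmetric])
  finally show ?thesis
    unfolding P_def .
qed

section \<open>Eigenvectors orthogonal to the ground state\<close>

lemma sum_psi_Hop: "(\<Sum>x\<in>V. of_real (\<psi> x) * Hop V E W f x) = of_real c * (\<Sum>x\<in>V. of_real (\<psi> x) * f x)"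
  unfolding Hop_symmetric[OF simple] using eigen by (simp add: sum_distrib_left algebra_simps)

lemma eigenvector_orthogonal:
  assumes "\<forall>x\<in>V. Hop V E W f x = \<mu> * f x" and "\<mu> \<noteq> of_real c"
  shows "(\<Sum>x\<in>V. of_real (\<psi> x) * f x) = 0"
proof -
  have "\<mu> * (\<Sum>x\<in>V. of_real (\<psi> x) * f x) = of_real c * (\<Sum>x\<in>V. of_real (\<psi> x) * f x)"
    using assms(1) sum_psi_Hop[of f] by (simp add: sum_distrib_left algebra_simps)
  then show ?thesis
    using assms(2) by simp
qed

lemma eigenvalue_eq_rayleigh_quotient:
  assumes "\<forall>x\<in>V. Hop V E W f x = \<mu> * f x" and "\<exists>x\<in>V. f x \<noteq> 0"
  shows "sqnorm f > 0" and "\<mu> = of_real (c + dirichlet f / (2 * sqnorm f))"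
proof -
  show pos_sqnorm: "sqnorm f > 0"
    using assms(2) finite_V unfolding sqnorm_def by (auto intro: sum_pos2)
  have "(\<Sum>x\<in>V. cnj (f x) * (Hop V E W f x - of_real c * f x))
      = (\<mu> - of_real c) * (\<Sum>x\<in>V. f x * cnj (f x))"
    using assms(1) by (simp add: sum_distrib_left algebra_simps)
  also have "(\<Sum>x\<in>V. f x * cnj (f x)) = of_real (sqnorm f)"
    unfolding sqnorm_def of_real_sum complex_norm_square ..
  finally have "(\<mu> - of_real c) * of_real (sqnorm f) = of_real (dirichlet f / 2)"
    unfolding quadratic_form_eq_dirichlet ..
  then show "\<mu> = of_real (c + dirichlet f / (2 * sqnorm f))"
    using pos_sqnorm by (simp add: field_simps)
qed

lemma orthogonal_eigenvalue_gap:
  assumes norm: "(\<Sum>x\<in>V. (\<psi> x)\<^sup>2) = 1"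
    and paths: "\<forall>x\<in>V. \<forall>y\<in>V. x \<noteq> y \<longrightarrow> edge_simple_path E x y (\<Gamma> x y)"
    and eigvec: "\<forall>x\<in>V. Hop V E W f x = \<mu> * f x" "\<exists>x\<in>V. f x \<noteq> 0"
    and orth: "(\<Sum>x\<in>V. of_real (\<psi> x) * f x) = 0"
  shows "\<mu> = of_real (Re \<mu>)" and "kappa' V E \<psi> \<Gamma> > 0" and "2 / kappa' V E \<psi> \<Gamma> \<le> Re \<mu> - c"
proof -
  note rayleigh = eigenvalue_eq_rayleigh_quotient[OF eigvec]
  have bound: "4 * sqnorm f \<le> kappa' V E \<psi> \<Gamma> * dirichlet f"
    using variance_le_path_sum[OF norm paths orth] path_sum_le_kappa'_dirichlet[OF paths, of f]
    by linarith
  then have "kappa' V E \<psi> \<Gamma> * dirichlet f > 0"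
    using rayleigh(1) by linarith
  then have "kappa' V E \<psi> \<Gamma> > 0" and "dirichlet f > 0"
    using dirichlet_nonneg[of f] by (auto simp: zero_less_mult_iff)
  moreover have "Re \<mu> = c + dirichlet f / (2 * sqnorm f)"
    using rayleigh(2) by simp
  moreover have "2 / kappa' V E \<psi> \<Gamma> \<le> dirichlet f / (2 * sqnorm f)"
    using bound rayleigh(1) \<open>kappa' V E \<psi> \<Gamma> > 0\<close> by (simp add: field_simps)
  ultimately show "\<mu> = of_real (Re \<mu>)" "kappa' V E \<psi> \<Gamma> > 0" "2 / kappa' V E \<psi> \<Gamma> \<le> Re \<mu> - c"
    using rayleigh by simp_all
qed

(* H preserves the orthogonal complement of psi, and a vector there is determined by its values
   off x0.  So compression x0 us is the matrix of H on that complement in the coordinates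
   us = V - {x0}: its eigenvectors are the eigenvectors of H orthogonal to psi. *)
definition orth_completion :: "'a \<Rightarrow> ('a \<Rightarrow> complex) \<Rightarrow> 'a \<Rightarrow> complex" where
  "orth_completion x0 w = w(x0 := - (\<Sum>u\<in>V - {x0}. of_real (\<psi> u) * w u) / of_real (\<psi> x0))"

lemma orthogonal_split:
  fixes g :: "'a \<Rightarrow> complex"
  assumes "x0 \<in> V"
  shows "(\<Sum>x\<in>V. of_real (\<psi> x) * g x) = of_real (\<psi> x0) * g x0 + (\<Sum>x\<in>V - {x0}. of_real (\<psi> x) * g x)"
  using assms finite_V by (simp add: sum.remove)

lemma orth_completion_orthogonal:
  assumes "x0 \<in> V"
  shows "(\<Sum>x\<in>V. of_real (\<psi> x) * orth_completion x0 w x) = 0"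
  using assms pos unfolding orthogonal_split[OF assms] orth_completion_def
  by (simp add: less_imp_neq[symmetric])

lemma orthogonal_eq_at:
  fixes g h :: "'a \<Rightarrow> complex"
  assumes "x0 \<in> V" and "(\<Sum>x\<in>V. of_real (\<psi> x) * g x) = 0" and "(\<Sum>x\<in>V. of_real (\<psi> x) * h x) = 0"
    and "\<forall>x\<in>V - {x0}. g x = h x"
  shows "g x0 = h x0"
proof -
  have "(\<Sum>x\<in>V - {x0}. of_real (\<psi> x) * g x) = (\<Sum>x\<in>V - {x0}. of_real (\<psi> x) * h x)"
    using assms(4) by simp
  then have "of_real (\<psi> x0) * g x0 = of_real (\<psi> x0) * h x0"
    using assms(2,3) unfolding orthogonal_split[OF assms(1)] by (metis add_right_cancel)
  then show ?thesis
    using pos assms(1) by force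
qed

lemma eigen_equation_extend:
  assumes x0: "x0 \<in> V" and orth: "(\<Sum>x\<in>V. of_real (\<psi> x) * f x) = 0"
    and off_x0: "\<forall>x\<in>V - {x0}. Hop V E W f x = \<mu> * f x"
  shows "\<forall>x\<in>V. Hop V E W f x = \<mu> * f x"
proof -
  have "(\<Sum>x\<in>V. of_real (\<psi> x) * (\<mu> * f x)) = \<mu> * (\<Sum>x\<in>V. of_real (\<psi> x) * f x)"
    by (simp add: sum_distrib_left mult.left_commute)
  then have "Hop V E W f x0 = \<mu> * f x0"
    using orthogonal_eq_at[OF x0 _ _ off_x0] orth sum_psi_Hop[of f] by simp
  with off_x0 show ?thesis
    by blast
qed

lemma orth_completion_self:
  assumes "x0 \<in> V" and "(\<Sum>x\<in>V. of_real (\<psi> x) * f x) = 0"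
  shows "orth_completion x0 f = f"
proof -
  have "orth_completion x0 f x0 = f x0"
    using orthogonal_eq_at[OF assms(1) orth_completion_orthogonal[OF assms(1), of f] assms(2)]
    unfolding orth_completion_def by simp
  then show ?thesis
    unfolding orth_completion_def by (simp add: fun_upd_idem)
qed

lemma orth_completion_cong:
  "(\<forall>u\<in>V - {x0}. w u = w' u) \<Longrightarrow> x \<in> V \<Longrightarrow> orth_completion x0 w x = orth_completion x0 w' x"
  unfolding orth_completion_def by auto

lemma orth_completion_sum:
  assumes "finite K"
  shows "orth_completion x0 (\<lambda>x. \<Sum>k\<in>K. a k * F k x) = (\<lambda>x. \<Sum>k\<in>K. a k * orth_completion x0 (F k) x)"
proof -
  have "(\<Sum>u\<in>V - {x0}. of_real (\<psi> u) * (\<Sum>k\<in>K. a k * F k u))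
      = (\<Sum>k\<in>K. a k * (\<Sum>u\<in>V - {x0}. of_real (\<psi> u) * F k u))"
    by (simp add: sum_distrib_left mult.left_commute sum.swap[of _ "V - {x0}"])
  then show ?thesis
    unfolding orth_completion_def
    by (auto simp: sum_divide_distrib sum_negf sum_distrib_left)
qed

definition compression :: "'a \<Rightarrow> 'a list \<Rightarrow> complex mat" where
  "compression x0 us = mat (length us) (length us)
     (\<lambda>(j, k). Hop V E W (orth_completion x0 (\<lambda>x. if x = us ! k then 1 else 0)) (us ! j))"

lemma compression_carrier: "compression x0 us \<in> carrier_mat (length us) (length us)"
  unfolding compression_def by simp

lemma compression_mult_vec:
  assumes "set us = V - {x0}" and "distinct us" and "x0 \<in> V"
  shows "compression x0 us *\<^sub>v vec (length us) (\<lambda>k. w (us ! k))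
    = vec (length us) (\<lambda>j. Hop V E W (orth_completion x0 w) (us ! j))"
proof (rule eq_vecI)
  fix j assume "j < dim_vec (vec (length us) (\<lambda>j. Hop V E W (orth_completion x0 w) (us ! j)))"
  then have j: "j < length us" by simp
  define w' where "w' x = (\<Sum>k<length us. w (us ! k) * (if x = us ! k then 1 else 0))" for x
  have "w' u = w u" if "u \<in> V - {x0}" for u
  proof -
    have "w' u = (\<Sum>v\<in>set us. w v * (if u = v then 1 else 0))"
      unfolding w'_def using sum.reindex_bij_betw[OF bij_betw_nth[OF assms(2) refl refl]] .
    also have "\<dots> = w u"
      using that assms(1) finite_V by (simp add: if_distrib cong: if_cong)
    finally show ?thesis .
  qed
  then have "Hop V E W (orth_completion x0 w') (us ! j) = Hop V E W (orth_completion x0 w) (us ! j)"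
    using j assms(1) nth_mem[OF j] by (intro Hop_cong orth_completion_cong) auto
  moreover have "(compression x0 us *\<^sub>v vec (length us) (\<lambda>k. w (us ! k))) $ j
      = Hop V E W (orth_completion x0 w') (us ! j)"
    using j unfolding compression_def w'_def
    by (simp add: scalar_prod_def atLeast0LessThan orth_completion_sum Hop_sum mult.commute)
  ultimately show "(compression x0 us *\<^sub>v vec (length us) (\<lambda>k. w (us ! k))) $ j
      = vec (length us) (\<lambda>j. Hop V E W (orth_completion x0 w) (us ! j)) $ j"
    using j by simp
qed (simp add: compression_def)

lemma eigenvalues_ne_subset_spectrum:
  assumes us: "set us = V - {x0}" "distinct us" and x0: "x0 \<in> V"
  shows "eigenvalues V E W - {c} \<subseteq> {l. of_real l \<in> spectrum (compression x0 us)}"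
proof
  fix l assume "l \<in> eigenvalues V E W - {c}"
  then obtain f where nonzero: "\<exists>x\<in>V. f x \<noteq> 0" and eig: "\<forall>x\<in>V. Hop V E W f x = of_real l * f x"
    and "l \<noteq> c"
    unfolding eigenvalues_def by auto
  then have orth: "(\<Sum>x\<in>V. of_real (\<psi> x) * f x) = 0"
    by (intro eigenvector_orthogonal) auto
  define v where "v = vec (length us) (\<lambda>k. f (us ! k))"
  have "compression x0 us *\<^sub>v v = vec (length us) (\<lambda>j. Hop V E W f (us ! j))"
    unfolding v_def compression_mult_vec[OF us x0] orth_completion_self[OF x0 orth] ..
  also have "\<dots> = of_real l \<cdot>\<^sub>v v"
    using eig us(1) unfolding v_def by (intro eq_vecI) auto
  finally have "compression x0 us *\<^sub>v v = of_real l \<cdot>\<^sub>v v" .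
  moreover have "v \<noteq> 0\<^sub>v (length us)"
  proof
    assume "v = 0\<^sub>v (length us)"
    then have "f (us ! k) = 0" if "k < length us" for k
      using that unfolding v_def by (metis index_vec index_zero_vec(1))
    then have "\<forall>x\<in>V - {x0}. f x = 0"
      unfolding us(1)[symmetric] by (auto simp: in_set_conv_nth)
    moreover from this have "f x0 = 0"
      using orthogonal_eq_at[OF x0 orth, of "\<lambda>_. 0"] by simp
    ultimately show False
      using nonzero by blast
  qed
  ultimately have "eigenvector (compression x0 us) v (of_real l)"
    unfolding eigenvector_def by (simp add: compression_def v_def)
  then show "l \<in> {l. of_real l \<in> spectrum (compression x0 us)}"
    unfolding spectrum_def eigenvalue_def by auto
qed

lemma finite_eigenvalues_ne:
  assumes "x0 \<in> V"
  shows "finite (eigenvalues V E W - {c})"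
proof -
  obtain us where us: "set us = V - {x0}" "distinct us"
    using finite_distinct_list[OF finite_Diff[OF finite_V]] by blast
  have "finite (of_real -` spectrum (compression x0 us) :: real set)"
    by (rule finite_vimageI[OF card_finite_spectrum(1)[OF compression_carrier]]) (simp add: inj_on_def)
  then have "finite {l::real. of_real l \<in> spectrum (compression x0 us)}"
    by (simp add: vimage_def)
  then show ?thesis
    by (rule finite_subset[OF eigenvalues_ne_subset_spectrum[OF us assms]])
qed

lemma compression_eigenvector:
  assumes us: "set us = V - {x0}" "distinct us" and x0: "x0 \<in> V"
    and eigvec: "eigenvector (compression x0 us) v \<mu>"
  obtains f where "\<exists>x\<in>V. f x \<noteq> 0" and "\<forall>x\<in>V. Hop V E W f x = \<mu> * f x"
    and "(\<Sum>x\<in>V. of_real (\<psi> x) * f x) = 0"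
proof -
  let ?m = "length us"
  have v: "v \<in> carrier_vec ?m" "v \<noteq> 0\<^sub>v ?m" "compression x0 us *\<^sub>v v = \<mu> \<cdot>\<^sub>v v"
    using eigvec unfolding eigenvector_def by (auto simp: compression_def)
  define w where "w x = (\<Sum>k<?m. if us ! k = x then v $ k else 0)" for x
  define f where "f = orth_completion x0 w"
  have w_nth: "w (us ! j) = v $ j" if "j < ?m" for j
    unfolding w_def using that nth_eq_iff_index_eq[OF us(2)] by (simp cong: if_cong)
  have f_nth: "f (us ! j) = v $ j" if "j < ?m" for j
  proof -
    have "us ! j \<noteq> x0"
      using that us nth_mem by blast
    then show ?thesis
      unfolding f_def orth_completion_def using w_nth[OF that] by simp
  qed
  have orth: "(\<Sum>x\<in>V. of_real (\<psi> x) * f x) = 0"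
    unfolding f_def by (rule orth_completion_orthogonal[OF x0])
  have "vec ?m (\<lambda>k. w (us ! k)) = v"
    using v(1) w_nth by (intro eq_vecI) auto
  then have "vec ?m (\<lambda>j. Hop V E W f (us ! j)) = \<mu> \<cdot>\<^sub>v v"
    using v(3) compression_mult_vec[OF us x0, of w] unfolding f_def by simp
  then have "Hop V E W f (us ! j) = \<mu> * f (us ! j)" if "j < ?m" for j
    using that f_nth v(1) by (metis index_smult_vec(1) index_vec carrier_vecD)
  then have "\<forall>x\<in>V - {x0}. Hop V E W f x = \<mu> * f x"
    unfolding us(1)[symmetric] by (auto simp: in_set_conv_nth)
  then have eig: "\<forall>x\<in>V. Hop V E W f x = \<mu> * f x"
    by (rule eigen_equation_extend[OF x0 orth])
  obtain k where "k < ?m" "v $ k \<noteq> 0"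
  proof (rule ccontr)
    assume "\<not> thesis"
    then have "\<forall>k<?m. v $ k = 0"
      using that by blast
    then have "v = 0\<^sub>v ?m"
      using v(1) by (intro eq_vecI) auto
    then show False
      using v(2) by simp
  qed
  then have "f (us ! k) \<noteq> 0" and "us ! k \<in> V"
    using f_nth us(1) nth_mem[of k us] by auto
  then have "\<exists>x\<in>V. f x \<noteq> 0"
    by blast
  then show ?thesis
    using eig orth by (rule that)
qed

lemma eigenvalues_ne_nonempty:
  assumes norm: "(\<Sum>x\<in>V. (\<psi> x)\<^sup>2) = 1"
    and paths: "\<forall>x\<in>V. \<forall>y\<in>V. x \<noteq> y \<longrightarrow> edge_simple_path E x y (\<Gamma> x y)"
    and x0: "x0 \<in> V" and "V - {x0} \<noteq> {}"
  shows "eigenvalues V E W - {c} \<noteq> {}"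
proof -
  obtain us where us: "set us = V - {x0}" "distinct us"
    using finite_distinct_list[OF finite_Diff[OF finite_V]] by blast
  then have "length us > 0"
    using assms(4) by (metis length_greater_0_conv set_empty)
  then obtain \<mu> v where "eigenvector (compression x0 us) v \<mu>"
    using spectrum_non_empty[OF compression_carrier] unfolding spectrum_def eigenvalue_def by blast
  then obtain f where f: "\<exists>x\<in>V. f x \<noteq> 0" "\<forall>x\<in>V. Hop V E W f x = \<mu> * f x"
    and orth: "(\<Sum>x\<in>V. of_real (\<psi> x) * f x) = 0"
    by (rule compression_eigenvector[OF us x0])
  note gap = orthogonal_eigenvalue_gap[OF norm paths f(2,1) orth]
  have "c < Re \<mu>"
    using gap(2,3) divide_pos_pos[of 2 "kappa' V E \<psi> \<Gamma>"] by linarith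
  then obtain r where "\<mu> = of_real r" and "c < r"
    using gap(1) by blast
  then have "r \<in> eigenvalues V E W - {c}"
    using f unfolding eigenvalues_def by auto
  then show ?thesis
    by blast
qed

lemma eigenvalue_gap:
  assumes norm: "(\<Sum>x\<in>V. (\<psi> x)\<^sup>2) = 1"
    and paths: "\<forall>x\<in>V. \<forall>y\<in>V. x \<noteq> y \<longrightarrow> edge_simple_path E x y (\<Gamma> x y)"
    and "l \<in> eigenvalues V E W - {c}"
  shows "1 / kappa' V E \<psi> \<Gamma> \<le> l - c"
proof -
  obtain f where f: "\<exists>x\<in>V. f x \<noteq> 0" "\<forall>x\<in>V. Hop V E W f x = of_real l * f x" and "l \<noteq> c"
    using assms(3) unfolding eigenvalues_def by auto
  then have "(\<Sum>x\<in>V. of_real (\<psi> x) * f x) = 0"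
    by (intro eigenvector_orthogonal) auto
  note gap = orthogonal_eigenvalue_gap[OF norm paths f(2,1) this]
  have "1 / kappa' V E \<psi> \<Gamma> \<le> 2 / kappa' V E \<psi> \<Gamma>"
    using gap(2) by (intro divide_right_mono) auto
  then show ?thesis
    using gap(3) by simp
qed

end

theorem mainTheorem6:
  fixes V :: "'a set" and E :: "'a \<Rightarrow> 'a \<Rightarrow> bool" and W :: "'a \<Rightarrow> real"
    and \<psi> :: "'a \<Rightarrow> real" and \<Gamma> :: "'a \<Rightarrow> 'a \<Rightarrow> 'a list"
  assumes "simple_graph V E" and "graph_connected V E" and "card V \<ge> 2"
    and "\<forall>x\<in>V. \<psi> x > 0" and "(\<Sum>x\<in>V. \<psi> x ^ 2) = 1"
    and "\<forall>x\<in>V. Hop V E W (\<lambda>v. of_real (\<psi> v)) x = of_real (ground_energy V E W) * of_real (\<psi> x)"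
    and "\<forall>x\<in>V. \<forall>y\<in>V. x \<noteq> y \<longrightarrow> edge_simple_path E x y (\<Gamma> x y)"
  shows "spectral_gap V E W \<ge> 1 / kappa' V E \<psi> \<Gamma>"
proof -
  interpret positive_eigenvector V E W \<psi> "ground_energy V E W"
    using assms(1,4,6) by unfold_locales
  have "\<not> card V \<le> Suc 0"
    using assms(3) by simp
  then obtain x0 y where "x0 \<in> V" "y \<in> V" "x0 \<noteq> y"
    using card_le_Suc0_iff_eq[OF finite_V] by blast
  let ?S = "eigenvalues V E W - {ground_energy V E W}"
  have "Min ?S \<in> ?S"
    using finite_eigenvalues_ne eigenvalues_ne_nonempty[OF assms(5,7)] \<open>x0 \<in> V\<close> \<open>y \<in> V\<close> \<open>x0 \<noteq> y\<close>
    by (intro Min_in) blast+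
  then show ?thesis
    unfolding spectral_gap_def by (rule eigenvalue_gap[OF assms(5,7)])
qed

end
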